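(* Let $M_C$ be a mixed cycle of order $n$ and let $\eta(M_C)$ be the nullity of $N(M_C)$. Then $\eta(M_C)=0$ if $n$ is odd; if $n\equiv 2\pmod 4$, then $\eta(M_C)=2$ when $M_C$ is negative and $\eta(M_C)=0$ when $M_C$ is positive, semi-positive or semi-negative; if $n\equiv 0\pmod 4$, then $\eta(M_C)=2$ when $M_C$ is positive and $\eta(M_C)=0$ when $M_C$ is negative, semi-positive or semi-negative.
   Context: A mixed graph is obtained from a finite simple graph by orienting the edges of some subset of its edges. With $\omega=\frac{1+\mathbf{i}\sqrt3}{2}$, the matrix $N=(n_{st})$ has entry $\omega$ for an arc from $u_s$ to $u_t$, $\bar\omega$ for an arc from $u_t$ to $u_s$, $1$ for an undirected edge, $0$ otherwise. A mixed cycle is a mixed graph whose underlying graph is a cycle $v_1v_2\cdots v_nv_1$ ($n\ge3$); its weight is $n_{12}n_{23}\cdots n_{n1}$, a sixth root of unity. It is positive if the weight is $1$, negative if $-1$, semi-positive if the weight is $\omega$ or $\bar\omega$, semi-negative if it is $-\omega$ or $-\bar\omega$. *)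

theory Defs
  imports "Jordan_Normal_Form.Matrix_Kernel"
begin

definition omega :: complex where
  "omega = Complex (1/2) (sqrt 3 / 2)"

text \<open>Entry omega at (s,t) means an arc s->t,
  cnj omega an arc t->s, 1 an undirected edge, 0 no edge.\<close>
definition mixed_matrix :: "nat \<Rightarrow> complex mat \<Rightarrow> bool" where
  "mixed_matrix n N \<longleftrightarrow> N \<in> carrier_mat n n \<and>
     (\<forall>i<n. \<forall>j<n. N $$ (i,j) \<in> {0, 1, omega, cnj omega}) \<and>
     (\<forall>i<n. N $$ (i,i) = 0) \<and>
     (\<forall>i<n. \<forall>j<n. N $$ (i,j) = cnj (N $$ (j,i)))"

text \<open>N is the matrix of a mixed cycle v_1 v_2 ... v_n v_1 with v_(k+1) = \<sigma> k.\<close>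
definition mixed_cycle :: "nat \<Rightarrow> complex mat \<Rightarrow> (nat \<Rightarrow> nat) \<Rightarrow> bool" where
  "mixed_cycle n N \<sigma> \<longleftrightarrow> n \<ge> 3 \<and> mixed_matrix n N \<and> bij_betw \<sigma> {..<n} {..<n} \<and>
     (\<forall>i<n. \<forall>j<n. N $$ (i,j) \<noteq> 0 \<longleftrightarrow>
        (\<exists>k<n. (i = \<sigma> k \<and> j = \<sigma> ((k+1) mod n)) \<or> (j = \<sigma> k \<and> i = \<sigma> ((k+1) mod n))))"

definition cycle_weight :: "nat \<Rightarrow> complex mat \<Rightarrow> (nat \<Rightarrow> nat) \<Rightarrow> complex" where
  "cycle_weight n N \<sigma> = (\<Prod>k<n. N $$ (\<sigma> k, \<sigma> ((k+1) mod n)))"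

definition positive_cycle where "positive_cycle n N \<sigma> \<longleftrightarrow> cycle_weight n N \<sigma> = 1"
definition negative_cycle where "negative_cycle n N \<sigma> \<longleftrightarrow> cycle_weight n N \<sigma> = -1"
definition semi_positive_cycle where
  "semi_positive_cycle n N \<sigma> \<longleftrightarrow> cycle_weight n N \<sigma> \<in> {omega, cnj omega}"
definition semi_negative_cycle where
  "semi_negative_cycle n N \<sigma> \<longleftrightarrow> cycle_weight n N \<sigma> \<in> {-omega, -cnj omega}"

definition nullity :: "complex mat \<Rightarrow> nat" where
  "nullity N = kernel_dim N"

end

theory Submission
  imports Defs
begin

(* Walk around the cycle v_0 v_1 ... v_(n-1) v_0 and let a_k = N(v_k, v_(k+1)); each a_k lies in
   {1, omega, cnj omega}, so it is a unit.  Row v_(k+1) of N x = 0 reads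
   a_(k+1) x(v_(k+2)) + cnj a_k x(v_k) = 0, i.e. the gauged value
   q_k = (-1)^(k div 2) a_0 ... a_(k-1) x(v_k) satisfies q_(k+2) = q_k.  So a kernel vector is
   determined by q_0 and q_1, and going once (or twice) around the cycle gives
   q_k = (-1)^j w^t q_k whenever 2j = tn, w being the cycle weight.
   For odd n take t = 2: w^6 = 1 forces w^2 <> -1, so the kernel is trivial.
   For n = 2h take t = 1: the kernel is trivial unless w = (-1)^h, and then the two solutions
   supported on the even and on the odd positions close up around the cycle and span a
   2-dimensional kernel. *)

lemma kernel_dim_eq_0:
  fixes A :: "'a :: field mat"
  assumes A: "A \<in> carrier_mat nr nc" and trivial: "\<And>x. x \<in> mat_kernel A \<Longrightarrow> x = 0\<^sub>v nc"
  shows "kernel_dim A = 0"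
proof -
  interpret K: kernel nr nc A by unfold_locales (rule A)
  have zero: "0\<^sub>v nc \<in> mat_kernel A"
    using A by (intro mat_kernelI) auto
  have "K.span {0\<^sub>v nc} = mat_kernel A"
  proof
    show "K.span {0\<^sub>v nc} \<subseteq> mat_kernel A"
      using zero by (intro K.Ker.span_is_subset2) simp
    show "mat_kernel A \<subseteq> K.span {0\<^sub>v nc}"
      using zero trivial K.Ker.in_own_span[of "{0\<^sub>v nc}"] by auto
  qed
  then show ?thesis
    by (simp add: K.Ker.dim0I)
qed

lemma kernel_dim_eq_2:
  fixes A :: "'a :: field mat"
  assumes A: "A \<in> carrier_mat nr nc"
    and u: "u \<in> mat_kernel A" and v: "v \<in> mat_kernel A"
    and i: "i < nc" and j: "j < nc" and "u $ i \<noteq> 0" "v $ i = 0" "v $ j \<noteq> 0"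
    and spanning: "\<And>x. x \<in> mat_kernel A \<Longrightarrow> \<exists>\<alpha> \<beta>. x = \<alpha> \<cdot>\<^sub>v u + \<beta> \<cdot>\<^sub>v v"
  shows "kernel_dim A = 2"
proof -
  interpret K: kernel nr nc A by unfold_locales (rule A)
  define B where "B = {u, v}"
  have "u \<noteq> v" using assms by auto
  have B: "B \<subseteq> mat_kernel A" "finite B" "card B = 2"
    using u v \<open>u \<noteq> v\<close> by (auto simp: B_def)
  have lincomb: "K.lincomb f B $ k = f u * u $ k + f v * v $ k" if "k < nc" for f k
    using K.lincomb_index[OF that B(1)] \<open>u \<noteq> v\<close> by (simp add: B_def)
  have "K.lin_indpt B"
  proof (rule K.Ker.finite_lin_indpt2[OF B(2,1)])
    fix f assume zero: "K.lincomb f B = 0\<^sub>v nc"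
    have "f u * u $ i = 0" "f u * u $ j + f v * v $ j = 0"
      using lincomb[OF i, of f] lincomb[OF j, of f] i j \<open>v $ i = 0\<close> by (simp_all add: zero)
    then show "\<forall>w\<in>B. f w = 0"
      using assms by (simp add: B_def)
  qed
  moreover have "K.span B = mat_kernel A"
  proof
    show "K.span B \<subseteq> mat_kernel A" by (rule K.Ker.span_is_subset2[OF B(1)])
    show "mat_kernel A \<subseteq> K.span B"
    proof
      fix x assume x: "x \<in> mat_kernel A"
      then obtain \<alpha> \<beta> where x_eq: "x = \<alpha> \<cdot>\<^sub>v u + \<beta> \<cdot>\<^sub>v v" using spanning by blast
      define f where "f w = (if w = u then \<alpha> else \<beta>)" for w
      have carrier: "u \<in> carrier_vec nc" "v \<in> carrier_vec nc" "K.lincomb f B \<in> carrier_vec nc"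
        using A u v K.Ker.lincomb_closed[OF B(1)] mat_kernel_carrier by blast+
      have "x = K.lincomb f B"
        using carrier \<open>u \<noteq> v\<close> by (intro eq_vecI) (auto simp: x_eq lincomb f_def)
      then show "x \<in> K.span B"
        unfolding K.Ker.span_def using B(2) by blast
    qed
  qed
  ultimately have "K.basis B"
    using B(1) by (simp add: K.Ker.basis_def)
  then show ?thesis
    using K.Ker.dim_basis[OF B(2)] B(3) by simp
qed

lemma cnj_omega_mult_omega: "cnj omega * omega = 1"
  unfolding omega_def by (simp add: complex_eq_iff power2_eq_square)

lemma omega_cube: "omega ^ 3 = -1"
  unfolding omega_def by (simp add: complex_eq_iff power3_eq_cube field_simps)

lemma semi_weight_neq_pm1:
  assumes "z \<in> {omega, cnj omega, -omega, -cnj omega}"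
  shows "z \<noteq> 1 \<and> z \<noteq> -1"
  using assms unfolding omega_def by (auto simp: complex_eq_iff)

lemma cnj_mult_self_eq_1:
  assumes "z \<in> {1, omega, cnj omega}" shows "cnj z * z = 1"
  using assms cnj_omega_mult_omega by (auto simp: mult.commute)

lemma pow_6_eq_1:
  assumes "z \<in> {1, omega, cnj omega}" shows "z ^ 6 = 1"
proof -
  have "omega ^ 6 = 1"
    using omega_cube power_mult[of omega 3 2] by simp
  then show ?thesis
    using assms by (auto simp flip: complex_cnj_power)
qed

lemma periodic_mod:
  fixes f :: "nat \<Rightarrow> 'a"
  assumes "\<And>k. f (k + n) = f k"
  shows "f (k mod n) = f k"
proof -
  have "f (m + q * n) = f m" for m q
  proof (induction q)
    case (Suc q)
    have "f (m + Suc q * n) = f ((m + q * n) + n)"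
      by (simp add: algebra_simps)
    then show ?case
      using assms Suc by simp
  qed simp
  from this[of "k mod n" "k div n"] show ?thesis by simp
qed

locale mixed_cycle_matrix =
  fixes n :: nat and N :: "complex mat" and \<sigma> :: "nat \<Rightarrow> nat"
  assumes cycle: "mixed_cycle n N \<sigma>"
begin

lemma n_ge_3: "n \<ge> 3"
  and N_carrier: "N \<in> carrier_mat n n"
  and bij: "bij_betw \<sigma> {..<n} {..<n}"
  using cycle unfolding mixed_cycle_def mixed_matrix_def by simp_all

(* These facts keep their quantifiers inside the formula: as a conditional rewrite rule,
   hermitian would send the simplifier into a loop. *)

lemma entries: "\<forall>i<n. \<forall>j<n. N $$ (i, j) \<in> {0, 1, omega, cnj omega}"
  using cycle unfolding mixed_cycle_def mixed_matrix_def by (elim conjE)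

lemma hermitian: "\<forall>i<n. \<forall>j<n. N $$ (i, j) = cnj (N $$ (j, i))"
  using cycle unfolding mixed_cycle_def mixed_matrix_def by (elim conjE)

lemma entry_neq_0_iff: "\<forall>i<n. \<forall>j<n. N $$ (i, j) \<noteq> 0 \<longleftrightarrow>
    (\<exists>k<n. (i = \<sigma> k \<and> j = \<sigma> ((k+1) mod n)) \<or> (j = \<sigma> k \<and> i = \<sigma> ((k+1) mod n)))"
  using cycle unfolding mixed_cycle_def by (elim conjE)

definition vtx :: "nat \<Rightarrow> nat" where
  "vtx k = \<sigma> (k mod n)"

definition edge_wt :: "nat \<Rightarrow> complex" where
  "edge_wt k = N $$ (vtx k, vtx (Suc k))"

definition walk_wt :: "nat \<Rightarrow> complex" where
  "walk_wt k = (\<Prod>m<k. edge_wt m)"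

lemma vtx_less: "vtx k < n"
  using bij_betwE[OF bij] n_ge_3 unfolding vtx_def by simp

lemma vtx_eq_iff: "vtx k = vtx l \<longleftrightarrow> k mod n = l mod n"
  using inj_on_eq_iff[OF bij_betw_imp_inj_on[OF bij]] n_ge_3 unfolding vtx_def by simp

lemma vtx_Suc_eq_iff: "vtx (Suc k) = vtx (Suc l) \<longleftrightarrow> vtx k = vtx l"
  unfolding vtx_eq_iff by (metis Zero_not_Suc mod_Suc nat.inject)

lemma vtx_add_n: "vtx (k + n) = vtx k"
  by (simp add: vtx_def)

lemma vtx_Suc_surj:
  assumes "i < n" shows "\<exists>k. i = vtx (Suc k)"
proof -
  obtain m where "m < n" "i = \<sigma> m"
    using bij assms unfolding bij_betw_def by auto
  then have "i = vtx (Suc (m + n - 1))"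
    using n_ge_3 by (simp add: vtx_def)
  then show ?thesis ..
qed

lemma vtx_neq_Suc_Suc: "vtx k \<noteq> vtx (Suc (Suc k))"
proof
  assume "vtx k = vtx (Suc (Suc k))"
  then have "n dvd Suc (Suc k) - k"
    using mod_eq_dvd_iff_nat[of k "Suc (Suc k)" n] unfolding vtx_eq_iff by simp
  then have "n dvd 2"
    by simp
  then show False
    using n_ge_3 by (simp add: nat_dvd_not_less)
qed

lemma edge_wt_cases: "edge_wt k \<in> {1, omega, cnj omega}"
proof -
  have "vtx k = \<sigma> (k mod n) \<and> vtx (Suc k) = \<sigma> ((k mod n + 1) mod n)"
    by (simp add: vtx_def mod_Suc_eq)
  moreover have "k mod n < n"
    using n_ge_3 by simp
  ultimately have "edge_wt k \<noteq> 0"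
    unfolding edge_wt_def entry_neq_0_iff[rule_format, OF vtx_less[of k] vtx_less[of "Suc k"]]
    by blast
  then show ?thesis
    using entries[rule_format, OF vtx_less[of k] vtx_less[of "Suc k"]]
    unfolding edge_wt_def by blast
qed

lemma cnj_edge_wt_mult: "cnj (edge_wt k) * edge_wt k = 1"
  using edge_wt_cases by (rule cnj_mult_self_eq_1)

lemma edge_wt_pow_6: "edge_wt k ^ 6 = 1"
  using edge_wt_cases by (rule pow_6_eq_1)

lemma edge_wt_add_n: "edge_wt (k + n) = edge_wt k"
  using vtx_add_n[of k] vtx_add_n[of "Suc k"] unfolding edge_wt_def by simp

lemma walk_wt_Suc: "walk_wt (Suc k) = walk_wt k * edge_wt k"
  by (simp add: walk_wt_def)

lemma cnj_walk_wt_mult: "cnj (walk_wt k) * walk_wt k = 1"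
proof (induction k)
  case (Suc k)
  have "cnj (walk_wt (Suc k)) * walk_wt (Suc k)
      = (cnj (walk_wt k) * walk_wt k) * (cnj (edge_wt k) * edge_wt k)"
    by (simp add: walk_wt_Suc)
  then show ?case
    by (simp add: Suc.IH cnj_edge_wt_mult)
qed (simp add: walk_wt_def)

lemma walk_wt_n: "walk_wt n = cycle_weight n N \<sigma>"
  unfolding cycle_weight_def walk_wt_def edge_wt_def vtx_def
  by (rule prod.cong) simp_all

lemma walk_wt_add_n: "walk_wt (k + n) = cycle_weight n N \<sigma> * walk_wt k"
proof (induction k)
  case (Suc k)
  have "walk_wt (Suc k + n) = walk_wt (k + n) * edge_wt (k + n)"
    by (simp add: walk_wt_Suc)
  also have "\<dots> = cycle_weight n N \<sigma> * (walk_wt k * edge_wt k)"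
    by (simp add: Suc.IH edge_wt_add_n)
  finally show ?case
    by (simp add: walk_wt_Suc)
qed (simp add: walk_wt_n walk_wt_def[of 0])

lemma walk_wt_add_mult_n: "walk_wt (k + t * n) = cycle_weight n N \<sigma> ^ t * walk_wt k"
proof (induction t)
  case (Suc t)
  have "walk_wt (k + Suc t * n) = walk_wt ((k + t * n) + n)"
    by (simp add: algebra_simps)
  then show ?case
    by (simp add: walk_wt_add_n Suc.IH)
qed simp

lemma cycle_weight_pow_6: "cycle_weight n N \<sigma> ^ 6 = 1"
proof -
  have "walk_wt n ^ 6 = (\<Prod>m<n. edge_wt m ^ 6)"
    by (simp add: walk_wt_def prod_power_distrib)
  then show ?thesis
    by (simp add: walk_wt_n edge_wt_pow_6)
qed

lemma row_entry_eq_0: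
  assumes j: "j < n" and "j \<noteq> vtx k" "j \<noteq> vtx (Suc (Suc k))"
  shows "N $$ (vtx (Suc k), j) = 0"
proof (rule ccontr)
  assume "N $$ (vtx (Suc k), j) \<noteq> 0"
  then obtain m where "m < n" and
    "(vtx (Suc k) = \<sigma> m \<and> j = \<sigma> ((m+1) mod n)) \<or> (j = \<sigma> m \<and> vtx (Suc k) = \<sigma> ((m+1) mod n))"
    using entry_neq_0_iff[rule_format, OF vtx_less j] by blast
  moreover have "\<sigma> m = vtx m" "\<sigma> ((m+1) mod n) = vtx (Suc m)"
    using \<open>m < n\<close> by (simp_all add: vtx_def)
  ultimately have
    "(vtx (Suc k) = vtx m \<and> j = vtx (Suc m)) \<or> (j = vtx m \<and> vtx (Suc k) = vtx (Suc m))"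
    by simp
  then show False
    using assms vtx_Suc_eq_iff[of "Suc k" m] vtx_Suc_eq_iff[of k m] by auto
qed

lemma mult_vec_vtx:
  assumes x: "x \<in> carrier_vec n"
  shows "(N *\<^sub>v x) $ vtx (Suc k)
    = edge_wt (Suc k) * x $ vtx (Suc (Suc k)) + cnj (edge_wt k) * x $ vtx k"
proof -
  have "(N *\<^sub>v x) $ vtx (Suc k) = (\<Sum>j\<in>{0..<n}. N $$ (vtx (Suc k), j) * x $ j)"
    using N_carrier x vtx_less by (simp add: scalar_prod_def)
  also have "\<dots> = (\<Sum>j\<in>{vtx k, vtx (Suc (Suc k))}. N $$ (vtx (Suc k), j) * x $ j)"
    by (rule sum.mono_neutral_right) (auto simp: vtx_less row_entry_eq_0)
  also have "\<dots> = N $$ (vtx (Suc k), vtx k) * x $ vtx k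
      + N $$ (vtx (Suc k), vtx (Suc (Suc k))) * x $ vtx (Suc (Suc k))"
    using vtx_neq_Suc_Suc by simp
  also have "N $$ (vtx (Suc k), vtx k) = cnj (edge_wt k)"
    unfolding edge_wt_def by (rule hermitian[rule_format, OF vtx_less vtx_less])
  also have "N $$ (vtx (Suc k), vtx (Suc (Suc k))) = edge_wt (Suc k)"
    unfolding edge_wt_def ..
  finally show ?thesis
    by (simp only: add.commute)
qed

definition gauge :: "complex vec \<Rightarrow> nat \<Rightarrow> complex" where
  "gauge x k = (-1) ^ (k div 2) * walk_wt k * x $ vtx k"

lemma entry_eq_gauge: "x $ vtx k = (-1) ^ (k div 2) * cnj (walk_wt k) * gauge x k"
proof -
  have "(-1) ^ (k div 2) * cnj (walk_wt k) * gauge x k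
      = ((-1) ^ (k div 2) * (-1) ^ (k div 2)) * (cnj (walk_wt k) * walk_wt k) * x $ vtx k"
    by (simp add: gauge_def ac_simps)
  then show ?thesis
    by (simp add: cnj_walk_wt_mult flip: power_add)
qed

lemma gauge_Suc_Suc:
  assumes "x \<in> mat_kernel N"
  shows "gauge x (Suc (Suc k)) = gauge x k"
proof -
  have x: "x \<in> carrier_vec n" "N *\<^sub>v x = 0\<^sub>v n"
    using mat_kernelD[OF N_carrier assms] by auto
  have "edge_wt (Suc k) * x $ vtx (Suc (Suc k)) + cnj (edge_wt k) * x $ vtx k = 0"
    using mult_vec_vtx[OF x(1), of k] x(2) vtx_less[of "Suc k"] by simp
  then have step: "edge_wt (Suc k) * x $ vtx (Suc (Suc k)) = - (cnj (edge_wt k) * x $ vtx k)"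
    by (simp add: eq_neg_iff_add_eq_0)
  have "gauge x (Suc (Suc k))
      = - ((-1) ^ (k div 2) * walk_wt k * edge_wt k * (edge_wt (Suc k) * x $ vtx (Suc (Suc k))))"
    by (simp add: gauge_def walk_wt_Suc)
  also have "\<dots> = (-1) ^ (k div 2) * walk_wt k * (cnj (edge_wt k) * edge_wt k) * x $ vtx k"
    by (simp add: step)
  also have "\<dots> = gauge x k"
    by (simp add: cnj_edge_wt_mult gauge_def)
  finally show ?thesis .
qed

lemma gauge_add_even:
  assumes "x \<in> mat_kernel N"
  shows "gauge x (k + 2 * j) = gauge x k"
  by (induction j) (simp_all add: gauge_Suc_Suc[OF assms])

lemma gauge_mod_2:
  assumes "x \<in> mat_kernel N"
  shows "gauge x (k mod 2) = gauge x k"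
  using gauge_add_even[OF assms, of "k mod 2" "k div 2"] by simp

lemma gauge_eq_0:
  assumes x: "x \<in> mat_kernel N" and period: "2 * j = t * n"
    and twist: "(-1) ^ j * cycle_weight n N \<sigma> ^ t \<noteq> 1"
  shows "gauge x k = 0"
proof -
  have "(k + 2 * j) div 2 = k div 2 + j" "vtx (k + t * n) = vtx k"
    by (simp_all add: vtx_def)
  then have "gauge x (k + 2 * j) = (-1) ^ j * cycle_weight n N \<sigma> ^ t * gauge x k"
    unfolding gauge_def period walk_wt_add_mult_n by (simp add: power_add ac_simps)
  then have "gauge x k = (-1) ^ j * cycle_weight n N \<sigma> ^ t * gauge x k"
    using gauge_add_even[OF x] by simp
  then have "(1 - (-1) ^ j * cycle_weight n N \<sigma> ^ t) * gauge x k = 0"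
    by (simp add: algebra_simps)
  with twist show ?thesis
    by simp
qed

lemma kernel_vec_eq_0:
  assumes x: "x \<in> mat_kernel N" and "2 * j = t * n"
    and "(-1) ^ j * cycle_weight n N \<sigma> ^ t \<noteq> 1"
  shows "x = 0\<^sub>v n"
proof (rule eq_vecI)
  show "dim_vec x = dim_vec (0\<^sub>v n)"
    using mat_kernelD[OF N_carrier x] by simp
  fix i assume "i < dim_vec (0\<^sub>v n)"
  then obtain k where "i = vtx (Suc k)"
    using vtx_Suc_surj by auto
  then show "x $ i = 0\<^sub>v n $ i"
    using entry_eq_gauge[of x "Suc k"] gauge_eq_0[OF assms] vtx_less by simp
qed

lemma nullity_eq_0:
  assumes "2 * j = t * n" and "(-1) ^ j * cycle_weight n N \<sigma> ^ t \<noteq> 1"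
  shows "nullity N = 0"
  unfolding nullity_def using N_carrier kernel_vec_eq_0[OF _ assms] by (rule kernel_dim_eq_0)

definition parity_sol :: "nat \<Rightarrow> nat \<Rightarrow> complex" where
  "parity_sol s k = (if k mod 2 = s then (-1) ^ (k div 2) * cnj (walk_wt k) else 0)"

lemma parity_sol_recurrence:
  "edge_wt (Suc k) * parity_sol s (Suc (Suc k)) + cnj (edge_wt k) * parity_sol s k = 0"
proof -
  have "edge_wt (Suc k) * parity_sol s (Suc (Suc k))
      = - (cnj (edge_wt (Suc k)) * edge_wt (Suc k)) * cnj (edge_wt k) * parity_sol s k"
    by (simp add: parity_sol_def walk_wt_Suc)
  then show ?thesis
    by (simp add: cnj_edge_wt_mult)
qed

definition parity_sol_vec :: "nat \<Rightarrow> complex vec" where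
  "parity_sol_vec s = vec n (\<lambda>i. parity_sol s (the_inv_into {..<n} \<sigma> i))"

lemma parity_sol_vec_carrier: "parity_sol_vec s \<in> carrier_vec n"
  by (simp add: parity_sol_vec_def)

context
  fixes h :: nat
  assumes n_eq: "n = 2 * h" and weight_eq: "cycle_weight n N \<sigma> = (-1) ^ h"
begin

lemma parity_sol_add_n: "parity_sol s (k + n) = parity_sol s k"
proof -
  have "(k + n) mod 2 = k mod 2" "(k + n) div 2 = k div 2 + h"
    using n_eq by simp_all
  moreover have "cnj (walk_wt (k + n)) = (-1) ^ h * cnj (walk_wt k)"
    by (simp add: walk_wt_add_n weight_eq)
  moreover have "(-1 :: complex) ^ h * (-1) ^ h = 1"
    by (simp flip: power_add)
  ultimately have
    "(-1) ^ ((k + n) div 2) * cnj (walk_wt (k + n)) = (-1) ^ (k div 2) * cnj (walk_wt k)"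
    by (simp add: power_add mult.assoc[symmetric] mult.commute[of "(-1) ^ h"])
  with \<open>(k + n) mod 2 = k mod 2\<close> show ?thesis
    by (simp add: parity_sol_def)
qed

lemma parity_sol_vec_vtx: "parity_sol_vec s $ vtx k = parity_sol s k"
proof -
  have "the_inv_into {..<n} \<sigma> (vtx k) = k mod n"
    unfolding vtx_def using n_ge_3 by (simp add: the_inv_into_f_f bij_betw_imp_inj_on[OF bij])
  then show ?thesis
    using periodic_mod[of "parity_sol s", OF parity_sol_add_n] vtx_less
    by (simp add: parity_sol_vec_def)
qed

lemma parity_sol_vec_kernel: "parity_sol_vec s \<in> mat_kernel N"
proof (rule mat_kernelI[OF N_carrier parity_sol_vec_carrier])
  show "N *\<^sub>v parity_sol_vec s = 0\<^sub>v n"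
  proof (rule eq_vecI)
    fix i assume "i < dim_vec (0\<^sub>v n)"
    then obtain k where "i = vtx (Suc k)"
      using vtx_Suc_surj by auto
    then show "(N *\<^sub>v parity_sol_vec s) $ i = 0\<^sub>v n $ i"
      using mult_vec_vtx[OF parity_sol_vec_carrier, of s k] parity_sol_recurrence[of k s] vtx_less
      by (simp add: parity_sol_vec_vtx)
  qed (use N_carrier in simp)
qed

lemma kernel_eq_parity_sol_comb:
  assumes x: "x \<in> mat_kernel N"
  shows "x = gauge x 0 \<cdot>\<^sub>v parity_sol_vec 0 + gauge x 1 \<cdot>\<^sub>v parity_sol_vec 1"
proof (rule eq_vecI)
  show "dim_vec x = dim_vec (gauge x 0 \<cdot>\<^sub>v parity_sol_vec 0 + gauge x 1 \<cdot>\<^sub>v parity_sol_vec 1)"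
    using mat_kernelD[OF N_carrier x] carrier_vecD[OF parity_sol_vec_carrier] by simp
  fix i assume "i < dim_vec (gauge x 0 \<cdot>\<^sub>v parity_sol_vec 0 + gauge x 1 \<cdot>\<^sub>v parity_sol_vec 1)"
  then have "i < n"
    using carrier_vecD[OF parity_sol_vec_carrier] by simp
  then obtain k where i: "i = vtx (Suc k)"
    using vtx_Suc_surj by auto
  have "x $ vtx (Suc k) = gauge x 0 * parity_sol 0 (Suc k) + gauge x 1 * parity_sol 1 (Suc k)"
    using entry_eq_gauge[of x "Suc k"] gauge_mod_2[OF x, of "Suc k"]
    by (cases "Suc k mod 2 = 0") (auto simp: parity_sol_def mod2_eq_if)
  with \<open>i < n\<close>
  show "x $ i = (gauge x 0 \<cdot>\<^sub>v parity_sol_vec 0 + gauge x 1 \<cdot>\<^sub>v parity_sol_vec 1) $ i"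
    using carrier_vecD[OF parity_sol_vec_carrier] by (simp add: i parity_sol_vec_vtx)
qed

lemma nullity_eq_2: "nullity N = 2"
proof -
  have "parity_sol_vec 0 $ vtx 0 \<noteq> 0" "parity_sol_vec 1 $ vtx 0 = 0"
    "parity_sol_vec 1 $ vtx 1 \<noteq> 0"
    using cnj_edge_wt_mult[of 0] by (auto simp: parity_sol_vec_vtx parity_sol_def walk_wt_def)
  then show ?thesis
    unfolding nullity_def using kernel_eq_parity_sol_comb
    by (intro kernel_dim_eq_2[OF N_carrier parity_sol_vec_kernel parity_sol_vec_kernel
          vtx_less vtx_less]) blast+
qed

end

lemma nullity_odd:
  assumes "odd n"
  shows "nullity N = 0"
proof (rule nullity_eq_0)
  show "2 * n = 2 * n" ..
  have "cycle_weight n N \<sigma> ^ 2 \<noteq> -1"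
  proof
    assume "cycle_weight n N \<sigma> ^ 2 = -1"
    then have "cycle_weight n N \<sigma> ^ 6 = -1"
      using power_mult[of "cycle_weight n N \<sigma>" 2 3] by simp
    then show False
      using cycle_weight_pow_6 by simp
  qed
  then show "(-1) ^ n * cycle_weight n N \<sigma> ^ 2 \<noteq> 1"
    using assms by (auto simp: minus_equation_iff)
qed

lemma nullity_even:
  assumes "n = 2 * h"
  shows "nullity N = (if cycle_weight n N \<sigma> = (-1) ^ h then 2 else 0)"
proof (cases "cycle_weight n N \<sigma> = (-1) ^ h")
  case True
  then show ?thesis
    using nullity_eq_2[OF assms] by simp
next
  case False
  have "(-1) ^ h * cycle_weight n N \<sigma> ^ 1 \<noteq> 1"
  proof
    assume "(-1) ^ h * cycle_weight n N \<sigma> ^ 1 = 1"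
    then have "(-1) ^ h * ((-1) ^ h * cycle_weight n N \<sigma>) = (-1) ^ h"
      by simp
    with False show False
      by (simp add: mult.assoc[symmetric] flip: power_add)
  qed
  then show ?thesis
    using nullity_eq_0[of h 1] assms False by simp
qed

end

theorem lemma5p4:
  assumes "mixed_cycle n N \<sigma>"
  shows "(odd n \<longrightarrow> nullity N = 0) \<and>
    (n mod 4 = 2 \<longrightarrow>
       (negative_cycle n N \<sigma> \<longrightarrow> nullity N = 2) \<and>
       (positive_cycle n N \<sigma> \<or> semi_positive_cycle n N \<sigma> \<or> semi_negative_cycle n N \<sigma>
          \<longrightarrow> nullity N = 0)) \<and>
    (n mod 4 = 0 \<longrightarrow>
       (positive_cycle n N \<sigma> \<longrightarrow> nullity N = 2) \<and>
       (negative_cycle n N \<sigma> \<or> semi_positive_cycle n N \<sigma> \<or> semi_negative_cycle n N \<sigma>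
          \<longrightarrow> nullity N = 0))"
proof -
  interpret mixed_cycle_matrix n N \<sigma>
    using assms by (rule mixed_cycle_matrix.intro)
  have semi: "cycle_weight n N \<sigma> \<noteq> 1 \<and> cycle_weight n N \<sigma> \<noteq> -1"
    if "semi_positive_cycle n N \<sigma> \<or> semi_negative_cycle n N \<sigma>"
    using that semi_weight_neq_pm1[of "cycle_weight n N \<sigma>"]
    unfolding semi_positive_cycle_def semi_negative_cycle_def by blast
  have mod_4_eq_2: "nullity N = (if cycle_weight n N \<sigma> = -1 then 2 else 0)" if "n mod 4 = 2"
  proof -
    have "n = 2 * (n div 2)" "odd (n div 2)"
      using that by presburger+
    then show ?thesis
      using nullity_even by simp
  qed
  have mod_4_eq_0: "nullity N = (if cycle_weight n N \<sigma> = 1 then 2 else 0)" if "n mod 4 = 0"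
  proof -
    have "n = 2 * (n div 2)" "even (n div 2)"
      using that by presburger+
    then show ?thesis
      using nullity_even by simp
  qed
  show ?thesis
    using nullity_odd mod_4_eq_2 mod_4_eq_0 semi
    by (auto simp: positive_cycle_def negative_cycle_def)
qed

end
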